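(* Let $K\ge 1$ and $T\ge 2$ be integers and let $a_1,\dots,a_{T-1}$ be binary sequences of period $K$. Define $s=I(0_K,a_1,\dots,a_{T-1})$ and $s'=I(1_K,a_1,\dots,a_{T-1})$, binary sequences of period $KT$. Let $0\le\tau<KT$ with $\tau=\tau_1T+\tau_2$, where $1\le\tau_2\le T-1$. Then $$R_{s',s}(\tau)=R_{s,s'}(\tau)\iff d(a_{T-\tau_2})=d(a_{\tau_2}),$$ and $$R_s(\tau)=R_{s'}(\tau)\iff d(a_{T-\tau_2})=-d(a_{\tau_2}).$$
   Context: A binary sequence of period $n$ is a map $\mathbb{Z}\to\{0,1\}$ with period $n$. For binary sequences $a,b$ of period $n$, $R_{a,b}(\tau)=\sum_{t=0}^{n-1}(-1)^{a(t)+b(t+\tau)}$ (indices mod $n$), and $R_a=R_{a,a}$. For binary sequences $b_0,\dots,b_{T-1}$ of period $K$, $I(b_0,\dots,b_{T-1})$ is the binary sequence $v$ of period $KT$ with $v(iT+j)=b_j(i)$ for $0\le i\le K-1$, $0\le j\le T-1$. $0_K$, $1_K$ are the all-zero and all-one sequences of period $K$. For a binary sequence $a$ of period $K$, $d(a)=2|\{0\le t\le K-1:a(t)=1\}|-K$. *)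

theory Defs
  imports Main
begin

definition binary_seq :: "nat \<Rightarrow> (int \<Rightarrow> int) \<Rightarrow> bool" where
  "binary_seq n a \<longleftrightarrow> (\<forall>t. a t \<in> {0, 1}) \<and> (\<forall>t. a (t + int n) = a t)"

definition corr :: "nat \<Rightarrow> (int \<Rightarrow> int) \<Rightarrow> (int \<Rightarrow> int) \<Rightarrow> int \<Rightarrow> int" where
  "corr n a b \<tau> = (\<Sum>t\<in>{0..<int n}. (-1) ^ nat (a t + b ((t + \<tau>) mod int n)))"

text \<open>Interleaving I(b_0,...,b_{T-1}): v(iT+j) = b_j(i).\<close>
definition interleave :: "nat \<Rightarrow> nat \<Rightarrow> (nat \<Rightarrow> int \<Rightarrow> int) \<Rightarrow> int \<Rightarrow> int" where
  "interleave K T b m = b (nat (m mod int T)) ((m div int T) mod int K)"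

definition zero_seq :: "int \<Rightarrow> int" where "zero_seq = (\<lambda>_. 0)"
definition one_seq :: "int \<Rightarrow> int" where "one_seq = (\<lambda>_. 1)"

definition dbal :: "nat \<Rightarrow> (int \<Rightarrow> int) \<Rightarrow> int" where
  "dbal K a = 2 * int (card {t \<in> {0..<int K}. a t = 1}) - int K"

end

theory Submission imports Defs begin

text \<open>Interleaving writes b0, ..., b(T-1) as the columns of a K x T array, so the correlation
  splits into column sums. For \<tau> = \<tau>1 T + \<tau>2 with 0 < \<tau>2 < T, column r of one sequence meets
  column (r + \<tau>2) mod T of the other; hence the constant column b0 enters only twice: against
  a(\<tau>2) in column 0, and as partner of a(T - \<tau>2) in column T - \<tau>2. Heads c0, c1 therefore give
  R = C - (-1)^c0 d(a(\<tau>2)) - (-1)^c1 d(a(T - \<tau>2)) with C independent of the heads, and comparing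
  the four choices of heads yields both equivalences.\<close>

lemma sum_atLeastLessThan_mult_split:
  fixes K T :: nat
  assumes "T > 0"
  shows "(\<Sum>t\<in>{0..<int K * int T}. f t) = (\<Sum>r\<in>{0..<int T}. \<Sum>i\<in>{0..<int K}. f (i * int T + r))"
proof -
  have bij: "bij_betw (\<lambda>(r, i). i * int T + r) ({0..<int T} \<times> {0..<int K}) {0..<int K * int T}"
  proof (rule bij_betw_byWitness[where f' = "\<lambda>t. (t mod int T, t div int T)"])
    show "(\<lambda>(r, i). i * int T + r) ` ({0..<int T} \<times> {0..<int K}) \<subseteq> {0..<int K * int T}"
    proof clarify
      fix r i assume "r \<in> {0..<int T}" "i \<in> {0..<int K}"
      moreover from this have "(i + 1) * int T \<le> int K * int T"
        by (intro mult_right_mono) auto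
      ultimately show "i * int T + r \<in> {0..<int K * int T}"
        by (auto simp: algebra_simps)
    qed
    show "(\<lambda>t. (t mod int T, t div int T)) ` {0..<int K * int T} \<subseteq> {0..<int T} \<times> {0..<int K}"
    proof (rule image_subsetI)
      fix t assume t: "t \<in> {0..<int K * int T}"
      then have "t div int T * int T < int K * int T"
        using assms by (smt (verit) div_mult_mod_eq pos_mod_sign of_nat_0_less_iff atLeastLessThan_iff)
      then show "(t mod int T, t div int T) \<in> {0..<int T} \<times> {0..<int K}"
        using t assms by (auto simp: pos_imp_zdiv_nonneg_iff mult_less_cancel_right)
    qed
  qed (use assms in auto)
  then show ?thesis
    by (simp add: sum.reindex_bij_betw[OF bij, symmetric] sum.cartesian_product case_prod_beta)
qed

lemma sum_mod_shift:
  fixes K :: nat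
  assumes "K > 0"
  shows "(\<Sum>i\<in>{0..<int K}. h ((i + c) mod int K)) = (\<Sum>i\<in>{0..<int K}. h i)"
proof -
  have "bij_betw (\<lambda>i. (i + c) mod int K) {0..<int K} {0..<int K}"
    by (rule bij_betw_byWitness[where f' = "\<lambda>i. (i - c) mod int K"])
       (use assms in \<open>auto simp: mod_simps\<close>)
  then show ?thesis
    by (rule sum.reindex_bij_betw)
qed

lemma sum_sign_eq_neg_dbal:
  assumes "\<And>t. b t \<in> {0, 1}"
  shows "(\<Sum>i\<in>{0..<int K}. (-1::int) ^ nat (b i)) = - dbal K b"
proof -
  have "(\<Sum>i\<in>{0..<int K}. (-1::int) ^ nat (b i))
      = (\<Sum>i\<in>{0..<int K}. 1 - 2 * (if b i = 1 then 1 else 0))"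
  proof (rule sum.cong[OF refl])
    fix i
    show "(-1::int) ^ nat (b i) = 1 - 2 * (if b i = 1 then 1 else 0)"
      using assms[of i] by auto
  qed
  also have "\<dots> = int K - 2 * int (card {t \<in> {0..<int K}. b t = 1})"
    by (simp add: sum_subtractf sum.If_cases sum_distrib_left[symmetric] Int_def conj_commute)
  finally show ?thesis
    unfolding dbal_def by simp
qed

lemma sum_sign_const_plus:
  assumes "c \<in> {0, 1}" and "\<And>t. b t \<in> {0, 1}"
  shows "(\<Sum>i\<in>{0..<int K}. (-1::int) ^ nat (c + b i)) = - ((-1) ^ nat c * dbal K b)"
proof -
  have "(\<Sum>i\<in>{0..<int K}. (-1::int) ^ nat (c + b i))
      = (-1) ^ nat c * (\<Sum>i\<in>{0..<int K}. (-1) ^ nat (b i))"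
    unfolding sum_distrib_left
  proof (rule sum.cong[OF refl])
    fix i
    show "(-1::int) ^ nat (c + b i) = (-1) ^ nat c * (-1) ^ nat (b i)"
      using assms(1) assms(2)[of i] by auto
  qed
  then show ?thesis
    using sum_sign_eq_neg_dbal[OF assms(2)] by simp
qed

lemma interleave_mod_period:
  assumes "K > 0" "T > 0"
  shows "interleave K T b (m mod (int K * int T)) = interleave K T b m"
proof -
  have "m mod (int K * int T) = int T * (m div int T mod int K) + m mod int T"
    using assms by (metis mod_mult2_eq' mult.commute)
  then show ?thesis
    unfolding interleave_def using assms by simp
qed

lemma interleave_mult_add:
  assumes "0 \<le> r" "r < int T"
  shows "interleave K T b (q * int T + r) = b (nat r) (q mod int K)"
  unfolding interleave_def using assms by simp

lemma interleave_fun_upd_0: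
  assumes "T > 0" "m mod int T \<noteq> 0"
  shows "interleave K T (b(0 := f)) m = interleave K T b m"
proof -
  have "nat (m mod int T) \<noteq> 0"
    using assms pos_mod_sign[of "int T" m] by linarith
  then show ?thesis
    unfolding interleave_def by simp
qed

lemma corr_eq_sum_columns:
  assumes "K > 0" "T > 0"
  shows "corr (K * T) u (interleave K T b) \<tau>
    = (\<Sum>r\<in>{0..<int T}. \<Sum>i\<in>{0..<int K}.
         (-1) ^ nat (u (i * int T + r) + interleave K T b (i * int T + r + \<tau>)))"
  unfolding corr_def
  by (simp add: interleave_mod_period[OF assms] sum_atLeastLessThan_mult_split[OF assms(2)])

lemma corr_interleave_const_heads:
  fixes K T :: nat and a :: "nat \<Rightarrow> int \<Rightarrow> int" and \<tau>1 \<tau>2 :: int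
  assumes "K > 0"
    and binary: "\<And>j t. 1 \<le> j \<Longrightarrow> j \<le> T - 1 \<Longrightarrow> a j t \<in> {0, 1}"
    and \<tau>2: "1 \<le> \<tau>2" "\<tau>2 < int T"
  obtains C where "\<And>c0 c1. c0 \<in> {0, 1} \<Longrightarrow> c1 \<in> {0, 1} \<Longrightarrow>
    corr (K * T) (interleave K T (a(0 := (\<lambda>_. c0)))) (interleave K T (a(0 := (\<lambda>_. c1))))
      (\<tau>1 * int T + \<tau>2)
    = C - (-1) ^ nat c0 * dbal K (a (nat \<tau>2)) - (-1) ^ nat c1 * dbal K (a (T - nat \<tau>2))"
proof
  fix c0 c1 :: int
  assume c0: "c0 \<in> {0, 1}" and c1: "c1 \<in> {0, 1}"
  define s where "s c = interleave K T (a(0 := (\<lambda>_. c)))" for c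
  define col where "col u v r = (\<Sum>i\<in>{0..<int K}.
    (-1::int) ^ nat (u (i * int T + r) + v (i * int T + r + (\<tau>1 * int T + \<tau>2))))" for u v r
  have "T > 0" using \<tau>2 by simp
  have \<tau>2': "nat \<tau>2 \<noteq> 0" "T - nat \<tau>2 \<noteq> 0" "nat (int T - \<tau>2) = T - nat \<tau>2"
    using \<tau>2 by linarith+
  have col_head: "col (s c0) (s c1) 0 = - ((-1) ^ nat c0 * dbal K (a (nat \<tau>2)))"
  proof -
    have "s c0 (i * int T + 0) = c0"
      and "s c1 (i * int T + 0 + (\<tau>1 * int T + \<tau>2)) = a (nat \<tau>2) ((i + \<tau>1) mod int K)" for i
      unfolding s_def
      using interleave_mult_add[of 0 T K _ i] interleave_mult_add[of \<tau>2 T K _ "i + \<tau>1"] \<tau>2 \<tau>2'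
      by (simp_all add: algebra_simps)
    then have "col (s c0) (s c1) 0
        = (\<Sum>i\<in>{0..<int K}. (-1) ^ nat (c0 + a (nat \<tau>2) ((i + \<tau>1) mod int K)))"
      unfolding col_def by simp
    also have "\<dots> = (\<Sum>i\<in>{0..<int K}. (-1) ^ nat (c0 + a (nat \<tau>2) i))"
      by (rule sum_mod_shift[OF \<open>K > 0\<close>, where h = "\<lambda>x. (-1) ^ nat (c0 + a (nat \<tau>2) x)"])
    finally show ?thesis
      using sum_sign_const_plus[OF c0 binary] \<tau>2 by simp
  qed
  have col_tail: "col (s c0) (s c1) (int T - \<tau>2) = - ((-1) ^ nat c1 * dbal K (a (T - nat \<tau>2)))"
  proof -
    have "s c0 (i * int T + (int T - \<tau>2)) = a (T - nat \<tau>2) i"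
      and "s c1 (i * int T + (int T - \<tau>2) + (\<tau>1 * int T + \<tau>2)) = c1"
      if "i \<in> {0..<int K}" for i
      unfolding s_def
      using that interleave_mult_add[of "int T - \<tau>2" T K _ i]
        interleave_mult_add[of 0 T K _ "i + 1 + \<tau>1"] \<tau>2 \<tau>2'
      by (simp_all add: algebra_simps)
    then have "col (s c0) (s c1) (int T - \<tau>2)
        = (\<Sum>i\<in>{0..<int K}. (-1) ^ nat (a (T - nat \<tau>2) i + c1))"
      unfolding col_def by (intro sum.cong) simp_all
    then show ?thesis
      using sum_sign_const_plus[OF c1 binary] \<tau>2 by (simp add: add.commute)
  qed
  have col_other: "col (s c0) (s c1) r = col (interleave K T a) (interleave K T a) r"
    if r: "r \<in> {0..<int T} - {0, int T - \<tau>2}" for r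
  proof -
    have column_shift: "(r + \<tau>2) mod int T \<noteq> 0"
    proof (cases "r + \<tau>2 < int T")
      case False
      have "(r + \<tau>2) mod int T = (r + \<tau>2 - int T) mod int T"
        by simp
      also have "\<dots> = r + \<tau>2 - int T"
        using False r \<tau>2 by (intro mod_pos_pos_trivial) auto
      finally show ?thesis
        using r by simp
    qed (use r \<tau>2 in simp)
    have "i * int T + r + (\<tau>1 * int T + \<tau>2) = (r + \<tau>2) + (i + \<tau>1) * int T" for i
      by (simp add: algebra_simps)
    then have "(i * int T + r + (\<tau>1 * int T + \<tau>2)) mod int T \<noteq> 0" for i
      using column_shift by (metis mod_mult_self1)
    moreover have "(i * int T + r) mod int T \<noteq> 0" for i
      using r by simp
    ultimately show ?thesis
      unfolding col_def s_def by (simp add: interleave_fun_upd_0[OF \<open>T > 0\<close>])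
  qed
  have "{0, int T - \<tau>2} \<subseteq> {0..<int T}" "int T - \<tau>2 \<noteq> 0"
    using \<tau>2 by auto
  then have "corr (K * T) (s c0) (s c1) (\<tau>1 * int T + \<tau>2)
      = col (s c0) (s c1) 0 + col (s c0) (s c1) (int T - \<tau>2)
        + (\<Sum>r\<in>{0..<int T} - {0, int T - \<tau>2}. col (s c0) (s c1) r)"
    unfolding s_def col_def corr_eq_sum_columns[OF \<open>K > 0\<close> \<open>T > 0\<close>]
    by (subst sum.subset_diff[of "{0, int T - \<tau>2}"]) auto
  then show "corr (K * T) (s c0) (s c1) (\<tau>1 * int T + \<tau>2)
    = (\<Sum>r\<in>{0..<int T} - {0, int T - \<tau>2}. col (interleave K T a) (interleave K T a) r)
      - (-1) ^ nat c0 * dbal K (a (nat \<tau>2)) - (-1) ^ nat c1 * dbal K (a (T - nat \<tau>2))"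
    using col_head col_tail col_other by simp
qed

theorem corollary1:
  fixes K T :: nat and a :: "nat \<Rightarrow> int \<Rightarrow> int" and \<tau> \<tau>1 \<tau>2 :: int
  assumes "K \<ge> 1" and "T \<ge> 2"
    and "\<And>j. 1 \<le> j \<Longrightarrow> j \<le> T - 1 \<Longrightarrow> binary_seq K (a j)"
    and "0 \<le> \<tau>" and "\<tau> < int K * int T"
    and "\<tau> = \<tau>1 * int T + \<tau>2" and "1 \<le> \<tau>2" and "\<tau>2 \<le> int T - 1"
  shows "let s = interleave K T (a(0 := zero_seq));
             s' = interleave K T (a(0 := one_seq)) in
         (corr (K * T) s' s \<tau> = corr (K * T) s s' \<tau> \<longleftrightarrow>
            dbal K (a (T - nat \<tau>2)) = dbal K (a (nat \<tau>2))) \<and>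
         (corr (K * T) s s \<tau> = corr (K * T) s' s' \<tau> \<longleftrightarrow>
            dbal K (a (T - nat \<tau>2)) = - dbal K (a (nat \<tau>2)))"
proof -
  have "K > 0" and "\<tau>2 < int T"
    using assms by auto
  moreover have "\<And>j t. 1 \<le> j \<Longrightarrow> j \<le> T - 1 \<Longrightarrow> a j t \<in> {0, 1}"
    using assms(3) unfolding binary_seq_def by blast
  ultimately obtain C where R: "\<And>c0 c1. c0 \<in> {0, 1} \<Longrightarrow> c1 \<in> {0, 1} \<Longrightarrow>
    corr (K * T) (interleave K T (a(0 := (\<lambda>_. c0)))) (interleave K T (a(0 := (\<lambda>_. c1)))) \<tau>
    = C - (-1) ^ nat c0 * dbal K (a (nat \<tau>2)) - (-1) ^ nat c1 * dbal K (a (T - nat \<tau>2))"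
    unfolding \<open>\<tau> = \<tau>1 * int T + \<tau>2\<close>
    using corr_interleave_const_heads[of K T a \<tau>2 \<tau>1] \<open>1 \<le> \<tau>2\<close> by blast
  show ?thesis
    unfolding Let_def zero_seq_def one_seq_def
    using R[of 0 0] R[of 0 1] R[of 1 0] R[of 1 1] by auto
qed

end
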